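(* Let $\mathsf{Prop}$ be a non-empty set of propositions, $\mathsf{Act}$ a non-empty set of actions, and $\mathsf{L}$ any fragment of $\mathsf{ML}(\mathsf{Prop},\mathsf{Act})$. For every sample $\mathcal{S}=(\mathcal{P},\mathcal{N})$ of Kripke structures in $\mathcal{K}(\mathsf{Prop},\mathsf{Act})$, if there is an $\mathcal{S}$-separating $\mathsf{L}$-formula, then there is one of size at most $2^n$, where $n:=\sum_{K\in\mathcal{P}\cup\mathcal{N}}|Q_K|$.
   Context: $\mathsf{ML}(\mathsf{Prop},\mathsf{Act})$-formulas: $\varphi::=p\mid\neg\varphi\mid\varphi\vee\varphi\mid\varphi\wedge\varphi\mid\langle a\rangle^{\ge k}\varphi\mid[a]\varphi$ with $p\in\mathsf{Prop}$, $a\in\mathsf{Act}$, $k\ge1$. A fragment is given by a subset of these operators (propositions, $\neg$, $\vee$, $\wedge$, each $\langle a\rangle^{\ge k}$, each $[a]$); its formulas are those using only those operators. The size $\mathsf{sz}(\varphi)$ is the number of distinct subformulas of $\varphi$. $\mathcal{K}(\mathsf{Prop},\mathsf{Act})$: Kripke structures $K=(Q,I,A,\delta,P,\pi)$ with $Q=Q_K$ a finite non-empty set of states, $I\subseteq Q$ non-empty set of initial states, $A\subseteq\mathsf{Act}$ non-empty, $\delta:Q\times A\to2^Q$ (with $\delta(q,a)=\emptyset$ for $a\notin A$), $P\subseteq\mathsf{Prop}$, $\pi:Q\to2^P$. Semantics: $q\models p$ iff $p\in\pi(q)$; Boolean connectives as usual; $q\models[a]\varphi$ iff $\delta(q,a)\subseteq\{q':q'\models\varphi\}$;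 $q\models\langle a\rangle^{\ge k}\varphi$ iff $|\delta(q,a)\cap\{q':q'\models\varphi\}|\ge k$; $K\models\varphi$ iff $q\models\varphi$ for all $q\in I$. A sample is a pair $(\mathcal{P},\mathcal{N})$ of finite sets of such structures; a formula is $\mathcal{S}$-separating if satisfied by every structure in $\mathcal{P}$ and by none in $\mathcal{N}$. *)

theory Defs
  imports Main
begin

datatype ('p, 'a) fml =
    Atom 'p
  | Neg "('p, 'a) fml"
  | Or "('p, 'a) fml" "('p, 'a) fml"
  | And "('p, 'a) fml" "('p, 'a) fml"
  | Dia 'a nat "('p, 'a) fml"
  | Box 'a "('p, 'a) fml"

fun is_ml :: "'p set \<Rightarrow> 'a set \<Rightarrow> ('p, 'a) fml \<Rightarrow> bool" where
  "is_ml Pr Ac (Atom p) = (p \<in> Pr)"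
| "is_ml Pr Ac (Neg f) = is_ml Pr Ac f"
| "is_ml Pr Ac (Or f g) = (is_ml Pr Ac f \<and> is_ml Pr Ac g)"
| "is_ml Pr Ac (And f g) = (is_ml Pr Ac f \<and> is_ml Pr Ac g)"
| "is_ml Pr Ac (Dia a k f) = (a \<in> Ac \<and> k \<ge> 1 \<and> is_ml Pr Ac f)"
| "is_ml Pr Ac (Box a f) = (a \<in> Ac \<and> is_ml Pr Ac f)"

datatype 'a oper = OProp | ONeg | OOr | OAnd | ODia 'a nat | OBox 'a

text \<open>All operators of ML(Prop,Act); a fragment is any subset of these.\<close>
definition ml_ops :: "'a set \<Rightarrow> 'a oper set" where
  "ml_ops Ac = {OProp, ONeg, OOr, OAnd} \<union> {ODia a k | a k. a \<in> Ac \<and> k \<ge> 1} \<union> {OBox a | a. a \<in> Ac}"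

fun ops :: "('p, 'a) fml \<Rightarrow> 'a oper set" where
  "ops (Atom p) = {OProp}"
| "ops (Neg f) = insert ONeg (ops f)"
| "ops (Or f g) = insert OOr (ops f \<union> ops g)"
| "ops (And f g) = insert OAnd (ops f \<union> ops g)"
| "ops (Dia a k f) = insert (ODia a k) (ops f)"
| "ops (Box a f) = insert (OBox a) (ops f)"

definition in_frag :: "'p set \<Rightarrow> 'a set \<Rightarrow> 'a oper set \<Rightarrow> ('p, 'a) fml \<Rightarrow> bool" where
  "in_frag Pr Ac L f \<longleftrightarrow> is_ml Pr Ac f \<and> ops f \<subseteq> L"

fun subfmls :: "('p, 'a) fml \<Rightarrow> ('p, 'a) fml set" where
  "subfmls (Atom p) = {Atom p}"
| "subfmls (Neg f) = insert (Neg f) (subfmls f)"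
| "subfmls (Or f g) = insert (Or f g) (subfmls f \<union> subfmls g)"
| "subfmls (And f g) = insert (And f g) (subfmls f \<union> subfmls g)"
| "subfmls (Dia a k f) = insert (Dia a k f) (subfmls f)"
| "subfmls (Box a f) = insert (Box a f) (subfmls f)"

definition sz :: "('p, 'a) fml \<Rightarrow> nat" where
  "sz f = card (subfmls f)"

record ('s, 'a, 'p) kripke =
  states :: "'s set"
  init :: "'s set"
  acts :: "'a set"
  trans :: "'s \<Rightarrow> 'a \<Rightarrow> 's set"
  props :: "'p set"
  lab :: "'s \<Rightarrow> 'p set"

definition is_kripke :: "'p set \<Rightarrow> 'a set \<Rightarrow> ('s, 'a, 'p) kripke \<Rightarrow> bool" where
  "is_kripke Pr Ac K \<longleftrightarrow>
     finite (states K) \<and> states K \<noteq> {} \<and>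
     init K \<subseteq> states K \<and> init K \<noteq> {} \<and>
     acts K \<subseteq> Ac \<and> acts K \<noteq> {} \<and>
     (\<forall>q \<in> states K. \<forall>a \<in> acts K. trans K q a \<subseteq> states K) \<and>
     (\<forall>q a. a \<notin> acts K \<longrightarrow> trans K q a = {}) \<and>
     props K \<subseteq> Pr \<and>
     (\<forall>q \<in> states K. lab K q \<subseteq> props K)"

fun sat :: "('s, 'a, 'p) kripke \<Rightarrow> 's \<Rightarrow> ('p, 'a) fml \<Rightarrow> bool" where
  "sat K q (Atom p) = (p \<in> lab K q)"
| "sat K q (Neg f) = (\<not> sat K q f)"
| "sat K q (Or f g) = (sat K q f \<or> sat K q g)"
| "sat K q (And f g) = (sat K q f \<and> sat K q g)"
| "sat K q (Box a f) = (trans K q a \<subseteq> {q'. sat K q' f})"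
| "sat K q (Dia a k f) = (card (trans K q a \<inter> {q'. sat K q' f}) \<ge> k)"

definition models :: "('s, 'a, 'p) kripke \<Rightarrow> ('p, 'a) fml \<Rightarrow> bool" where
  "models K f \<longleftrightarrow> (\<forall>q \<in> init K. sat K q f)"

definition separating :: "('s, 'a, 'p) kripke set \<Rightarrow> ('s, 'a, 'p) kripke set \<Rightarrow> ('p, 'a) fml \<Rightarrow> bool" where
  "separating Pos Ng f \<longleftrightarrow> (\<forall>K \<in> Pos. models K f) \<and> (\<forall>K \<in> Ng. \<not> models K f)"

end

theory Submission
  imports Defs
begin

(* Take a separating L-formula f of minimal size. Two distinct subformulas g, h of f cannot be
   satisfied by the same states of the sample: otherwise, choosing the naming so that g is not a
   subformula of h, replacing g by h in f gives a smaller L-formula that is still separating.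
   So the subformulas of f have pairwise distinct extensions, which are subsets of the disjoint
   union of the state sets; there are 2^n of those. *)

lemma subfmls_refl: "f \<in> subfmls f"
  by (cases f) auto

lemma finite_subfmls: "finite (subfmls f)"
  by (induction f) auto

lemma subfmls_trans: "g \<in> subfmls f \<Longrightarrow> subfmls g \<subseteq> subfmls f"
  by (induction f) auto

lemma size_subfmls: "g \<in> subfmls f \<Longrightarrow> size g < size f \<or> g = f"
  by (induction f) auto

lemma subfmls_antisym: "g \<in> subfmls f \<Longrightarrow> f \<in> subfmls g \<Longrightarrow> g = f"
  using size_subfmls[of g f] size_subfmls[of f g] by auto

lemma in_frag_subfmls: "g \<in> subfmls f \<Longrightarrow> in_frag Pr Ac L f \<Longrightarrow> in_frag Pr Ac L g"
  unfolding in_frag_def by (induction f) auto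

primrec replace_fml :: "('p, 'a) fml \<Rightarrow> ('p, 'a) fml \<Rightarrow> ('p, 'a) fml \<Rightarrow> ('p, 'a) fml" where
  "replace_fml g h (Atom p) = (if Atom p = g then h else Atom p)"
| "replace_fml g h (Neg f) = (if Neg f = g then h else Neg (replace_fml g h f))"
| "replace_fml g h (Or f1 f2) =
     (if Or f1 f2 = g then h else Or (replace_fml g h f1) (replace_fml g h f2))"
| "replace_fml g h (And f1 f2) =
     (if And f1 f2 = g then h else And (replace_fml g h f1) (replace_fml g h f2))"
| "replace_fml g h (Dia a k f) = (if Dia a k f = g then h else Dia a k (replace_fml g h f))"
| "replace_fml g h (Box a f) = (if Box a f = g then h else Box a (replace_fml g h f))"

lemma replace_fml_self: "replace_fml g h g = h"
  by (cases g) auto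

lemma replace_fml_id: "g \<notin> subfmls f \<Longrightarrow> replace_fml g h f = f"
  by (induction f) (auto simp: subfmls_refl)

lemma in_frag_replace_fml:
  "in_frag Pr Ac L f \<Longrightarrow> in_frag Pr Ac L h \<Longrightarrow> in_frag Pr Ac L (replace_fml g h f)"
  unfolding in_frag_def by (induction f) auto

lemma subfmls_replace_fml:
  "subfmls (replace_fml g h f) \<subseteq> replace_fml g h ` subfmls f \<union> subfmls h"
  by (induction f) auto

lemma sz_replace_fml_less:
  assumes g: "g \<in> subfmls f" and h: "h \<in> subfmls f"
    and "g \<noteq> h" and g_notin_h: "g \<notin> subfmls h"
  shows "sz (replace_fml g h f) < sz f"
proof -
  have fixes_h: "replace_fml g h \<psi> = \<psi>" if "\<psi> \<in> subfmls h" for \<psi>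
    using that g_notin_h subfmls_trans replace_fml_id by blast
  have "subfmls (replace_fml g h f) \<subseteq> replace_fml g h ` subfmls f \<union> subfmls h"
    by (rule subfmls_replace_fml)
  also have "\<dots> \<subseteq> replace_fml g h ` (subfmls f - {g})"
  proof -
    have "replace_fml g h g = replace_fml g h h"
      using replace_fml_self fixes_h[OF subfmls_refl] by simp
    then have "replace_fml g h ` subfmls f \<subseteq> replace_fml g h ` (subfmls f - {g})"
      using h \<open>g \<noteq> h\<close> by (auto intro: rev_image_eqI)
    moreover have "subfmls h \<subseteq> replace_fml g h ` (subfmls f - {g})"
    proof
      fix \<psi> assume "\<psi> \<in> subfmls h"
      moreover from this have "\<psi> \<in> subfmls f - {g}"
        using subfmls_trans[OF h] g_notin_h by blast
      ultimately show "\<psi> \<in> replace_fml g h ` (subfmls f - {g})"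
        using fixes_h by (metis rev_image_eqI)
    qed
    ultimately show ?thesis
      by (rule Un_least)
  qed
  finally have "sz (replace_fml g h f) \<le> card (replace_fml g h ` (subfmls f - {g}))"
    unfolding sz_def by (simp add: card_mono finite_subfmls)
  also have "\<dots> \<le> card (subfmls f - {g})"
    by (rule card_image_le) (simp add: finite_subfmls)
  also have "\<dots> < sz f"
    unfolding sz_def using finite_subfmls g by (rule card_Diff1_less)
  finally show ?thesis .
qed

lemma is_kripke_trans_subset:
  "is_kripke Pr Ac K \<Longrightarrow> q \<in> states K \<Longrightarrow> trans K q a \<subseteq> states K"
  unfolding is_kripke_def by (cases "a \<in> acts K") auto

lemma is_kripke_init_subset: "is_kripke Pr Ac K \<Longrightarrow> init K \<subseteq> states K"
  unfolding is_kripke_def by blast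

lemma sat_replace_fml:
  assumes K: "is_kripke Pr Ac K"
    and equiv: "\<And>q. q \<in> states K \<Longrightarrow> sat K q g = sat K q h"
    and "q \<in> states K"
  shows "sat K q (replace_fml g h f) = sat K q f"
  using \<open>q \<in> states K\<close>
proof (induction f arbitrary: q)
  case (Dia a k f)
  have "trans K q a \<inter> {q'. sat K q' (replace_fml g h f)} = trans K q a \<inter> {q'. sat K q' f}"
    using Dia.IH is_kripke_trans_subset[OF K Dia.prems] by blast
  then show ?case
    using equiv[OF Dia.prems] by (cases "Dia a k f = g") auto
next
  case (Box a f)
  have "trans K q a \<subseteq> {q'. sat K q' (replace_fml g h f)} \<longleftrightarrow> trans K q a \<subseteq> {q'. sat K q' f}"
    using Box.IH is_kripke_trans_subset[OF K Box.prems] by blast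
  then show ?case
    using equiv[OF Box.prems] by (cases "Box a f = g") auto
qed (auto simp: equiv[symmetric])

definition extension ::
    "('s, 'a, 'p) kripke set \<Rightarrow> ('p, 'a) fml \<Rightarrow> (('s, 'a, 'p) kripke \<times> 's) set" where
  "extension S f = (SIGMA K:S. {q \<in> states K. sat K q f})"

lemma separating_replace_fml:
  assumes kripke: "\<forall>K \<in> Pos \<union> Ng. is_kripke Pr Ac K"
    and equiv: "extension (Pos \<union> Ng) g = extension (Pos \<union> Ng) h"
    and "separating Pos Ng f"
  shows "separating Pos Ng (replace_fml g h f)"
proof -
  have "models K (replace_fml g h f) = models K f" if "K \<in> Pos \<union> Ng" for K
  proof -
    have K: "is_kripke Pr Ac K"
      using kripke that by blast
    have "sat K q g = sat K q h" if "q \<in> states K" for q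
      using equiv \<open>K \<in> Pos \<union> Ng\<close> that unfolding extension_def by blast
    then have "sat K q (replace_fml g h f) = sat K q f" if "q \<in> init K" for q
      using sat_replace_fml[OF K] is_kripke_init_subset[OF K] that by blast
    then show ?thesis
      unfolding models_def by blast
  qed
  with \<open>separating Pos Ng f\<close> show ?thesis
    unfolding separating_def by blast
qed

lemma inj_on_extension_if_minimal:
  assumes kripke: "\<forall>K \<in> Pos \<union> Ng. is_kripke Pr Ac K"
    and f: "in_frag Pr Ac L f" "separating Pos Ng f"
    and minimal: "\<And>f'. in_frag Pr Ac L f' \<Longrightarrow> separating Pos Ng f' \<Longrightarrow> sz f \<le> sz f'"
  shows "inj_on (extension (Pos \<union> Ng)) (subfmls f)"
proof (rule inj_onI, rule ccontr)
  have no_shrink: False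
    if "g \<in> subfmls f" "h \<in> subfmls f" "g \<noteq> h" "g \<notin> subfmls h"
      and "extension (Pos \<union> Ng) g = extension (Pos \<union> Ng) h" for g h
  proof -
    have "in_frag Pr Ac L (replace_fml g h f)"
      using f(1) in_frag_subfmls[OF \<open>h \<in> subfmls f\<close>] by (simp add: in_frag_replace_fml)
    moreover have "separating Pos Ng (replace_fml g h f)"
      using separating_replace_fml[OF kripke] that f(2) by blast
    ultimately show False
      using minimal sz_replace_fml_less[OF that(1-4)] by fastforce
  qed
  fix g h
  assume "g \<in> subfmls f" "h \<in> subfmls f"
    and "extension (Pos \<union> Ng) g = extension (Pos \<union> Ng) h" and "g \<noteq> h"
  then show False
    using no_shrink[of g h] no_shrink[of h g] subfmls_antisym by metis
qed

lemma sz_le_if_inj_on_extension: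
  assumes "finite S" and "\<forall>K \<in> S. finite (states K)"
    and inj: "inj_on (extension S) (subfmls f)"
  shows "sz f \<le> 2 ^ (\<Sum>K \<in> S. card (states K))"
proof -
  have fin: "finite (Sigma S states)"
    using assms(1,2) by (simp add: finite_SigmaI)
  have "sz f = card (extension S ` subfmls f)"
    unfolding sz_def using inj by (simp add: card_image)
  also have "\<dots> \<le> card (Pow (Sigma S states))"
    using fin by (intro card_mono) (auto simp: extension_def)
  also have "\<dots> = 2 ^ (\<Sum>K \<in> S. card (states K))"
    using fin assms(1,2) by (simp add: card_Pow card_SigmaI)
  finally show ?thesis .
qed

theorem corollary1:
  fixes Pr :: "'p set" and Ac :: "'a set" and L :: "'a oper set"
    and Pos Ng :: "('s, 'a, 'p) kripke set"
  assumes "Pr \<noteq> {}" and "Ac \<noteq> {}"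
    and "L \<subseteq> ml_ops Ac"
    and "finite Pos" and "finite Ng"
    and "\<forall>K \<in> Pos \<union> Ng. is_kripke Pr Ac K"
    and "\<exists>f. in_frag Pr Ac L f \<and> separating Pos Ng f"
  shows "\<exists>f. in_frag Pr Ac L f \<and> separating Pos Ng f \<and>
           sz f \<le> 2 ^ (\<Sum>K \<in> Pos \<union> Ng. card (states K))"
proof -
  obtain f where f: "in_frag Pr Ac L f" "separating Pos Ng f"
    and minimal: "\<And>f'. in_frag Pr Ac L f' \<Longrightarrow> separating Pos Ng f' \<Longrightarrow> sz f \<le> sz f'"
    using ex_has_least_nat[of "\<lambda>f. in_frag Pr Ac L f \<and> separating Pos Ng f" _ sz] assms(7)
    by blast
  have "inj_on (extension (Pos \<union> Ng)) (subfmls f)"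
    using inj_on_extension_if_minimal[OF assms(6) f minimal] .
  moreover have "\<forall>K \<in> Pos \<union> Ng. finite (states K)"
    using assms(6) unfolding is_kripke_def by blast
  ultimately have "sz f \<le> 2 ^ (\<Sum>K \<in> Pos \<union> Ng. card (states K))"
    using assms(4,5) by (simp add: sz_le_if_inj_on_extension)
  with f show ?thesis
    by blast
qed

end
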